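(* Let $S\subset\mathbb{R}^n$ be a polyhedron and $U_0=\{A\in\mathbb{R}^{n\times n}\mid \mathrm{Tr}(V_j^TA)\le v_j,\ j=1,\dots,s\}$ a polyhedron of matrices, and let $S_0^\infty=\{x\in S\mid A^tx\in S\ \text{for all } A\in U_0 \text{ and all integers } t\ge1\}$. Suppose that $S$ is compact and $S_0^\infty$ is full-dimensional. Then $U_0$ is bounded and every matrix in $U_0$ has spectral radius less than or equal to one.
   Context: Full-dimensional means having nonempty interior. The spectral radius of a square matrix is the maximum modulus of its eigenvalues. *)

theory Defs
  imports "HOL-Analysis.Analysis"
begin

primrec matpow :: "real^'n^'n \<Rightarrow> nat \<Rightarrow> real^'n^'n" where
  "matpow A 0 = mat 1"
| "matpow A (Suc k) = A ** matpow A k"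

definition complexify :: "real^'n^'n \<Rightarrow> complex^'n^'n" where
  "complexify A = (\<chi> i j. complex_of_real (A $ i $ j))"

definition eigenvalues_c :: "real^'n^'n \<Rightarrow> complex set" where
  "eigenvalues_c A = {c. \<exists>x::complex^'n. x \<noteq> 0 \<and> complexify A *v x = c *s x}"

definition spectral_radius_r :: "real^'n^'n \<Rightarrow> real" where
  "spectral_radius_r A = Max (cmod ` eigenvalues_c A)"

end

theory Submission
  imports Defs "HOL-Computational_Algebra.Fundamental_Theorem_Algebra"
begin

(* Some ball B(x0, r) lies in S0inf, and every power A^t with A in U0, t >= 1,
   maps it into the bounded set S. Hence the entries of all these powers are bounded by one
   constant depending only on S and r. Taking t = 1 bounds U0; and an eigenvalue l of A with
   |l| > 1 is impossible, since A^t z = l^t z would grow without bound for an eigenvector z. *)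

definition char_poly_matrix :: "'a::comm_ring_1^'n^'n \<Rightarrow> 'a poly^'n^'n" where
  "char_poly_matrix B = (\<chi> i j. [:B $ i $ j:] - (if i = j then [:0, 1:] else 0))"

lemma poly_det_char_poly_matrix: "poly (det (char_poly_matrix B)) c = det (B - mat c)"
  unfolding det_def char_poly_matrix_def
  by (simp add: poly_sum poly_prod mat_def of_int_poly if_distrib[of "\<lambda>q. poly q c"] cong: if_cong)

lemma coeff_det_char_poly_matrix:
  "coeff (det (char_poly_matrix (B::'a::idom^'n^'n))) CARD('n) = (-1) ^ CARD('n)"
proof -
  let ?M = "char_poly_matrix B"
  let ?f = "\<lambda>p. of_int (sign p) * (\<Prod>i\<in>UNIV. ?M $ i $ p i)"
  have diag: "?M $ i $ i = [:B $ i $ i, -1:]" for i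
    by (simp add: char_poly_matrix_def)
  have deg: "degree (?M $ i $ j) \<le> (if i = j then 1 else 0)" for i j
    by (auto simp: char_poly_matrix_def degree_add_le)
  \<comment> \<open>only the identity permutation picks all n diagonal entries of degree one\<close>
  have coeff_other: "coeff (?f p) CARD('n) = 0" if "p permutes UNIV" "p \<noteq> id" for p
  proof -
    obtain k where k: "p k \<noteq> k" using \<open>p \<noteq> id\<close> by (metis eq_id_iff)
    have "degree (\<Prod>i\<in>UNIV. ?M $ i $ p i) \<le> (\<Sum>i\<in>UNIV. (if i = p i then 1 else 0::nat))"
      by (rule order_trans[OF degree_prod_sum_le]) (auto intro!: sum_mono simp: deg)
    also have "\<dots> < (\<Sum>i\<in>(UNIV::'n set). 1::nat)"
      using k by (intro sum_strict_mono_ex1) (auto intro!: exI[of _ k])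
    finally have "degree (\<Prod>i\<in>UNIV. ?M $ i $ p i) < CARD('n)" by simp
    then have "degree (?f p) < CARD('n)"
      by (metis (no_types) degree_mult_le le_less_trans add_0 degree_of_int)
    then show ?thesis by (simp add: coeff_eq_0)
  qed
  have coeff_id: "coeff (?f id) CARD('n) = (-1) ^ CARD('n)"
  proof -
    have "degree (\<Prod>i\<in>UNIV. ?M $ i $ id i) = CARD('n)"
      by (subst degree_prod_sum_eq) (auto simp: diag)
    moreover have "lead_coeff (\<Prod>i\<in>UNIV. ?M $ i $ id i) = (-1) ^ CARD('n)"
      by (simp add: lead_coeff_prod diag)
    ultimately show ?thesis by (simp add: sign_id)
  qed
  have "coeff (det ?M) CARD('n) = (\<Sum>p\<in>{p. p permutes UNIV}. coeff (?f p) CARD('n))"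
    by (simp add: det_def coeff_sum)
  also have "\<dots> = coeff (?f id) CARD('n) + (\<Sum>p\<in>{p. p permutes UNIV} - {id}. coeff (?f p) CARD('n))"
    by (rule sum.remove) (simp_all add: finite_permutations permutes_id)
  also have "(\<Sum>p\<in>{p. p permutes UNIV} - {id}. coeff (?f p) CARD('n)) = 0"
    by (rule sum.neutral) (auto intro: coeff_other)
  finally show ?thesis using coeff_id by simp
qed

lemma matrix_vector_mult_mat: "mat c *v x = c *s (x::'a::comm_ring_1^'n)"
proof -
  have "(\<Sum>j\<in>UNIV. (if i = j then c else 0) * x $ j) = c * x $ i" for i
    by (simp add: if_distrib[of "\<lambda>u. u * x $ _"] cong: if_cong)
  then show ?thesis by (simp add: vec_eq_iff matrix_vector_mult_def mat_def)
qed

lemma eigenvalues_c_iff_det: "c \<in> eigenvalues_c A \<longleftrightarrow> det (complexify A - mat c) = 0"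
proof -
  let ?B = "complexify A - mat c"
  have "det ?B \<noteq> 0 \<longleftrightarrow> inj ((*v) ?B)"
    using det_nz_iff_inj_gen[of "(*v) ?B"] by (simp add: matrix_of_matrix_vector_mul)
  also have "\<dots> \<longleftrightarrow> (\<forall>x. ?B *v x = 0 \<longrightarrow> x = 0)"
    by (rule vec.inj_iff_eq_0)
  finally show ?thesis
    by (auto simp: eigenvalues_c_def matrix_vector_mult_diff_rdistrib matrix_vector_mult_mat)
qed

lemma eigenvalues_c_finite_nonempty:
  fixes A :: "real^'n^'n"
  shows "finite (eigenvalues_c A)" and "eigenvalues_c A \<noteq> {}"
proof -
  define P where "P = det (char_poly_matrix (complexify A))"
  have roots: "eigenvalues_c A = {c. poly P c = 0}"
    by (simp add: set_eq_iff eigenvalues_c_iff_det P_def poly_det_char_poly_matrix)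
  have "coeff P CARD('n) \<noteq> 0"
    by (simp add: P_def coeff_det_char_poly_matrix)
  then have "P \<noteq> 0" and "CARD('n) \<le> degree P"
    using le_degree by auto
  then have "0 < degree P"
    using order.strict_trans2 by fastforce
  with \<open>P \<noteq> 0\<close> show "finite (eigenvalues_c A)" and "eigenvalues_c A \<noteq> {}"
    unfolding roots using poly_roots_finite alg_closed_imp_poly_has_root by auto
qed

lemma complexify_matrix_mult: "complexify (A ** B) = complexify A ** complexify B"
  by (simp add: complexify_def matrix_matrix_mult_def vec_eq_iff)

lemma complexify_mat_1: "complexify (mat 1) = mat 1"
  by (simp add: complexify_def mat_def vec_eq_iff)

lemma complexify_matpow_eigenvector:
  assumes "complexify A *v z = l *s z"
  shows "complexify (matpow A t) *v z = l ^ t *s z"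
proof (induction t)
  case 0
  then show ?case by (simp add: complexify_mat_1)
next
  case (Suc t)
  have "complexify (matpow A (Suc t)) *v z = complexify A *v (complexify (matpow A t) *v z)"
    by (simp add: complexify_matrix_mult matrix_vector_mul_assoc)
  also have "\<dots> = l ^ t *s (complexify A *v z)"
    by (simp add: Suc vec.scale)
  finally show ?case by (simp add: assms)
qed

lemma power_bounded_imp_le_1:
  fixes x :: real
  assumes "\<And>t. t \<ge> 1 \<Longrightarrow> x ^ t \<le> B"
  shows "x \<le> 1"
proof (rule ccontr)
  assume "\<not> x \<le> 1"
  then obtain n where "B < x ^ n"
    using real_arch_pow by (metis not_le)
  also have "\<dots> \<le> x ^ Suc n"
    using \<open>\<not> x \<le> 1\<close> by simp
  finally show False
    using assms[of "Suc n"] by simp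
qed

lemma cmod_eigenvalue_le_1_if_matpow_bounded:
  assumes bounded: "\<And>t k j. t \<ge> 1 \<Longrightarrow> \<bar>matpow A t $ k $ j\<bar> \<le> C"
    and "l \<in> eigenvalues_c A"
  shows "cmod l \<le> 1"
proof -
  obtain z where z: "z \<noteq> 0" "complexify A *v z = l *s z"
    using \<open>l \<in> eigenvalues_c A\<close> by (auto simp: eigenvalues_c_def)
  obtain k where k: "z $ k \<noteq> 0"
    using z(1) by (metis vec_eq_iff zero_index)
  have "cmod l ^ t \<le> C * (\<Sum>j\<in>UNIV. cmod (z $ j)) / cmod (z $ k)" if "t \<ge> 1" for t
  proof -
    have "l ^ t * z $ k = (\<Sum>j\<in>UNIV. complex_of_real (matpow A t $ k $ j) * z $ j)"
      using complexify_matpow_eigenvector[OF z(2), of t]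
      by (simp add: vec_eq_iff matrix_vector_mult_def complexify_def)
    then have "cmod l ^ t * cmod (z $ k) \<le> (\<Sum>j\<in>UNIV. \<bar>matpow A t $ k $ j\<bar> * cmod (z $ j))"
      by (metis (no_types, lifting) norm_sum norm_mult norm_power norm_of_real sum.cong)
    also have "\<dots> \<le> (\<Sum>j\<in>UNIV. C * cmod (z $ j))"
      by (intro sum_mono mult_right_mono bounded \<open>t \<ge> 1\<close>) simp
    finally show ?thesis
      using k by (simp add: sum_distrib_left pos_le_divide_eq)
  qed
  then show ?thesis
    by (rule power_bounded_imp_le_1)
qed

lemma spectral_radius_r_le_1_if_matpow_bounded:
  assumes "\<And>t k j. t \<ge> 1 \<Longrightarrow> \<bar>matpow A t $ k $ j\<bar> \<le> C"
  shows "spectral_radius_r A \<le> 1"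
  unfolding spectral_radius_r_def
  using eigenvalues_c_finite_nonempty[of A] cmod_eigenvalue_le_1_if_matpow_bounded[OF assms]
  by (simp add: Max_le_iff)

lemma abs_matrix_entry_le_if_ball_image_bounded:
  fixes Q :: "real^'n^'m"
  assumes "r > 0" and bounded: "\<And>x. x \<in> ball x0 r \<Longrightarrow> norm (Q *v x) \<le> M"
  shows "\<bar>Q $ k $ j\<bar> \<le> 4 * M / r"
proof -
  define y where "y = (r / 2) *\<^sub>R (axis j 1 :: real^'n)"
  have "x0 \<in> ball x0 r" "x0 + y \<in> ball x0 r"
    using \<open>r > 0\<close> by (simp_all add: y_def dist_norm norm_axis_1)
  then have "norm (Q *v (x0 + y) - Q *v x0) \<le> 2 * M"
    using bounded by (smt (verit) norm_triangle_ineq4)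
  then have "norm (Q *v y) \<le> 2 * M"
    by (simp add: matrix_vector_right_distrib)
  moreover have "(Q *v y) $ k = (r / 2) * Q $ k $ j"
    by (simp add: y_def matrix_vector_mult_def axis_def if_distrib[of "\<lambda>u. _ * u"] cong: if_cong)
  ultimately have "(r / 2) * \<bar>Q $ k $ j\<bar> \<le> 2 * M"
    using \<open>r > 0\<close> by (metis norm_bound_component_le_cart abs_mult abs_of_pos half_gt_zero)
  then show ?thesis
    using \<open>r > 0\<close> by (simp add: field_simps)
qed

lemma bounded_if_matrix_entries_bounded:
  fixes U :: "(real^'n^'m) set"
  assumes "\<And>A k j. A \<in> U \<Longrightarrow> \<bar>A $ k $ j\<bar> \<le> C"
  shows "bounded U"
  unfolding bounded_iff
proof (intro exI ballI)
  fix A assume "A \<in> U"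
  have "norm A \<le> (\<Sum>k\<in>UNIV. norm (A $ k))"
    unfolding norm_vec_def by (rule L2_set_le_sum) simp
  also have "\<dots> \<le> (\<Sum>k\<in>UNIV. \<Sum>j\<in>UNIV. \<bar>A $ k $ j\<bar>)"
    by (intro sum_mono norm_le_l1_cart)
  also have "\<dots> \<le> (\<Sum>k\<in>(UNIV::'m set). \<Sum>j\<in>(UNIV::'n set). C)"
    using assms[OF \<open>A \<in> U\<close>] by (intro sum_mono) simp
  finally show "norm A \<le> (\<Sum>k\<in>(UNIV::'m set). \<Sum>j\<in>(UNIV::'n set). C)" .
qed

theorem proposition15:
  fixes S :: "(real^'n) set"
    and V :: "nat \<Rightarrow> real^'n^'n" and v :: "nat \<Rightarrow> real" and s :: nat
    and U0 :: "(real^'n^'n) set" and S0inf :: "(real^'n) set"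
  assumes "polyhedron S"
    and U0_def: "U0 = {A. \<forall>j\<in>{1..s}. trace (transpose (V j) ** A) \<le> v j}"
    and S0inf_def: "S0inf = {x \<in> S. \<forall>A\<in>U0. \<forall>t::nat. t \<ge> 1 \<longrightarrow> matpow A t *v x \<in> S}"
    and "compact S"
    and "interior S0inf \<noteq> {}"
  shows "bounded U0 \<and> (\<forall>A\<in>U0. spectral_radius_r A \<le> 1)"
proof -
  obtain M where M: "\<And>x. x \<in> S \<Longrightarrow> norm x \<le> M"
    using compact_imp_bounded[OF \<open>compact S\<close>] bounded_iff by blast
  obtain x0 r where "r > 0" "ball x0 r \<subseteq> S0inf"
    using \<open>interior S0inf \<noteq> {}\<close> by (metis all_not_in_conv mem_interior)
  then have powers_bounded: "\<bar>matpow A t $ k $ j\<bar> \<le> 4 * M / r"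
    if "A \<in> U0" "t \<ge> 1" for A t k j
    using that M unfolding S0inf_def by (intro abs_matrix_entry_le_if_ball_image_bounded) auto
  have "bounded U0"
    using powers_bounded[of _ 1] by (intro bounded_if_matrix_entries_bounded) (simp add: matrix_mul_rid)
  moreover have "spectral_radius_r A \<le> 1" if "A \<in> U0" for A
    using powers_bounded[OF that] by (rule spectral_radius_r_le_1_if_matpow_bounded)
  ultimately show ?thesis by blast
qed

end
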